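(* Let $\kappa_*>0$ and $L>0$, and let $H^*$ be a probability measure on $[L,\infty)$. Suppose $X_1,\dots,X_n$ are generated by the hierarchical model $X_i\mid\theta_i\overset{ind}{\sim}\mathrm{Poi}(\theta_i)$, $\theta_i\mid\lambda_i\overset{ind}{\sim}\mathrm{Gamma}(\kappa_*,\lambda_i)$ (shape $\kappa_*$, rate $\lambda_i$), $\lambda_i\overset{iid}{\sim}H^*$. Let $\widehat H_n$ be any maximizer $$\widehat H_n\in\arg\max_{H\in\mathcal P((0,\infty])}\sum_{i=1}^n\log f_H(X_i).$$ Then $$\mathbb E_{H^*}\big[\mathfrak H^2(f_{\widehat H_n},f_{H^*})\big]\le C\,\frac{\log n}{n},$$ where $C>0$ is a constant depending only on $(\kappa_*,L)$.
   Context: For $H$ a probability measure on $(0,\infty]$ and $x\in\{0,1,2,\dots\}$, $f_H(x)=\int r_{\kappa_*,\lambda}(x)\,dH(\lambda)$ with the negative binomial pmf $r_{\kappa_*,\lambda}(x)=\frac{\Gamma(x+\kappa_* )}{x!\,\Gamma(\kappa_* )}\left(\frac{1}{\lambda+1}\right)^x\left(\frac{\lambda}{\lambda+1}\right)^{\kappa_*}$ for $\lambda<\infty$ and $r_{\kappa_*,\infty}(x)=\mathbf 1(x=0)$; $f_H$ is the marginal pmf of $X_i$ when $\lambda_i\sim H$. $\mathcal P(A)$ denotes the set of probability measures on $A$. The squared Hellinger distance between pmfs on $\mathbb Z_+$ is $\mathfrak H^2(p,q)=\frac12\sum_{x=0}^\infty(\sqrt{p(x)}-\sqrt{q(x)})^2$.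 $\mathbb E_{H^*}$ denotes expectation under the model with $\lambda_i\overset{iid}{\sim}H^*$. *)

theory Defs
  imports "HOL-Probability.Probability"
begin

text \<open>Mixing distributions live on (0,\<infinity>], represented by the type ennreal
  (with top = \<infinity>) equipped with its Borel sigma-algebra.\<close>

definition prob_on_pos_ext :: "ennreal measure \<Rightarrow> bool" where
  "prob_on_pos_ext H \<longleftrightarrow> prob_space H \<and> sets H = sets borel \<and> emeasure H {0} = 0"

definition negbin :: "real \<Rightarrow> ennreal \<Rightarrow> nat \<Rightarrow> real" where
  "negbin \<kappa> lam x =
     (if lam = \<infinity> then (if x = 0 then 1 else 0)
      else (let l = enn2real lam in
        Gamma (real x + \<kappa>) / (fact x * Gamma \<kappa>) * (1 / (l + 1)) ^ x * (l / (l + 1)) powr \<kappa>))"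

definition fH :: "real \<Rightarrow> ennreal measure \<Rightarrow> nat \<Rightarrow> real" where
  "fH \<kappa> H x = (\<integral>lam. negbin \<kappa> lam x \<partial>H)"

definition eln :: "real \<Rightarrow> ereal" where
  "eln t = (if t > 0 then ereal (ln t) else -\<infinity>)"

definition loglik :: "real \<Rightarrow> ennreal measure \<Rightarrow> nat list \<Rightarrow> ereal" where
  "loglik \<kappa> H xs = (\<Sum>i<length xs. eln (fH \<kappa> H (xs ! i)))"

definition hellinger2 :: "(nat \<Rightarrow> real) \<Rightarrow> (nat \<Rightarrow> real) \<Rightarrow> real" where
  "hellinger2 p q = (1/2) * (\<Sum>x. (sqrt (p x) - sqrt (q x))^2)"

end

theory Submission
  imports Defs
begin

(* First, comparing the NPMLE Hhat with the mixtures (1 - t) Hhat + t Hstar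
   for t -> 0+ gives the first-order condition  sum_i fstar(X_i) / fhat(X_i) <= n,
   where fstar = f_Hstar and fhat = f_Hhat.
   Second, whenever all X_i <= K, this condition alone forces
   H^2(fhat, fstar) <= 2 chi2_K + 2 T_K, where chi2_K is the chi-square discrepancy on {0..K}
   between the empirical frequencies and fstar, and T_K is the mass of fstar beyond K; the key
   inequality is u >= 3/2 - 1/(2 u^2) for u = sqrt (fhat / fstar) at the data points.
   Third, since every rate is at least L, the generating function of fstar is finite at
   2 (L + 1) / (L + 2) > 1, so T_K decays geometrically in K.
   Taking expectations, E chi2_K <= (K + 1) / n and E #{i. X_i > K} = n T_K, and K of order
   log n yields the rate log n / n. *)

section \<open>Negative binomial distribution\<close>

lemma negative_binomial_series:
  fixes \<kappa> w :: real
  assumes "\<bar>w\<bar> < 1"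
  shows "(\<lambda>x. pochhammer \<kappa> x / fact x * w ^ x) sums (1 - w) powr (- \<kappa>)"
proof -
  have "((- \<kappa>) gchoose x) * (- w) ^ x = pochhammer \<kappa> x / fact x * w ^ x" for x
  proof -
    have "((- \<kappa>) gchoose x) * (- w) ^ x = ((- 1) ^ x * (- 1) ^ x) * (pochhammer \<kappa> x / fact x) * w ^ x"
      by (simp add: gbinomial_pochhammer power_minus[of w])
    also have "(- 1 :: real) ^ x * (- 1) ^ x = 1"
      by (simp flip: power_add)
    finally show ?thesis by simp
  qed
  with gen_binomial_real[of "- w" "- \<kappa>"] assms show ?thesis
    by simp
qed

lemma negbin_finite:
  assumes "\<kappa> > 0" "lam \<noteq> \<infinity>"
  shows "negbin \<kappa> lam x = pochhammer \<kappa> x / fact x * (1 / (enn2real lam + 1)) ^ x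
                          * (enn2real lam / (enn2real lam + 1)) powr \<kappa>"
proof -
  have "\<kappa> \<notin> \<int>\<^sub>\<le>\<^sub>0"
    using assms(1) by (auto elim!: nonpos_Ints_cases)
  then have "pochhammer \<kappa> x = Gamma (real x + \<kappa>) / Gamma \<kappa>"
    by (simp add: pochhammer_Gamma add.commute)
  then show ?thesis
    using assms(2) by (simp add: negbin_def Let_def)
qed

lemma negbin_nonneg: "\<kappa> > 0 \<Longrightarrow> 0 \<le> negbin \<kappa> lam x"
  by (cases "lam = \<infinity>") (simp add: negbin_def, simp add: negbin_finite pochhammer_pos less_imp_le)

lemma negbin_pos:
  assumes "\<kappa> > 0" "0 < lam" "lam < \<infinity>"
  shows "0 < negbin \<kappa> lam x"
proof -
  have "0 < enn2real lam"
    using assms(2,3) by (simp add: enn2real_positive_iff)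
  with assms show ?thesis
    by (simp add: negbin_finite pochhammer_pos)
qed

lemma negbin_pgf:
  assumes "\<kappa> > 0" "0 < lam" "lam < \<infinity>" "0 \<le> z" "z < enn2real lam + 1"
  shows "(\<lambda>x. negbin \<kappa> lam x * z ^ x) sums
           ((enn2real lam / (enn2real lam + 1)) powr \<kappa> * (1 - z / (enn2real lam + 1)) powr (- \<kappa>))"
proof -
  define l where "l = enn2real lam"
  have "0 < l"
    using assms(2,3) by (simp add: l_def enn2real_positive_iff)
  have "(\<lambda>x. pochhammer \<kappa> x / fact x * (z / (l + 1)) ^ x) sums (1 - z / (l + 1)) powr (- \<kappa>)"
    by (rule negative_binomial_series) (use assms(4,5) \<open>0 < l\<close> in \<open>simp add: l_def\<close>)
  then have "(\<lambda>x. (l / (l + 1)) powr \<kappa> * (pochhammer \<kappa> x / fact x * (z / (l + 1)) ^ x)) sums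
               ((l / (l + 1)) powr \<kappa> * (1 - z / (l + 1)) powr (- \<kappa>))"
    by (rule sums_mult)
  moreover have "(l / (l + 1)) powr \<kappa> * (pochhammer \<kappa> x / fact x * (z / (l + 1)) ^ x)
                   = negbin \<kappa> lam x * z ^ x" for x
    using assms(1,3) by (simp add: negbin_finite l_def power_divide field_simps)
  ultimately show ?thesis
    by (simp add: l_def)
qed

lemma negbin_sums:
  assumes "\<kappa> > 0" "lam \<noteq> 0"
  shows "negbin \<kappa> lam sums 1"
proof (cases "lam = \<infinity>")
  case True
  then have "negbin \<kappa> lam = (\<lambda>x. if x = 0 then 1 else 0)"
    by (simp add: negbin_def fun_eq_iff)
  then show ?thesis
    using sums_single[of 0 "\<lambda>_. 1 :: real"] by simp
next
  case False
  define l where "l = enn2real lam"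
  have "0 < l"
    using assms(2) False by (simp add: l_def enn2real_positive_iff top.not_eq_extremum zero_less_iff_neq_zero)
  have "(\<lambda>x. negbin \<kappa> lam x * 1 ^ x) sums ((l / (l + 1)) powr \<kappa> * (1 - 1 / (l + 1)) powr (- \<kappa>))"
    unfolding l_def
    by (rule negbin_pgf) (use assms False \<open>0 < l\<close> in \<open>auto simp: l_def top.not_eq_extremum zero_less_iff_neq_zero\<close>)
  moreover have "1 - 1 / (l + 1) = l / (l + 1)"
    using \<open>0 < l\<close> by (simp add: field_simps)
  ultimately show ?thesis
    using \<open>0 < l\<close> by (simp add: powr_minus)
qed

lemma sum_le_1_if_sums_1:
  fixes f :: "nat \<Rightarrow> real"
  assumes "\<And>x. 0 \<le> f x" "f sums 1"
  shows "sum f A \<le> 1"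
proof (cases "finite A")
  case True
  then show ?thesis
    using sum_le_suminf[OF sums_summable[OF assms(2)] True] assms by (simp add: sums_unique[symmetric])
qed simp

lemma negbin_le_1:
  assumes "\<kappa> > 0"
  shows "negbin \<kappa> lam x \<le> 1"
proof (cases "lam = 0")
  case True
  then show ?thesis
    using assms by (simp add: negbin_def)
next
  case False
  then show ?thesis
    using sum_le_1_if_sums_1[OF negbin_nonneg negbin_sums, OF assms assms False, of "{x}"] by simp
qed

lemma borel_measurable_negbin [measurable]: "(\<lambda>lam. negbin \<kappa> lam x) \<in> borel_measurable borel"
  unfolding negbin_def Let_def by measurable

lemma tail_le_generating_function:
  fixes p :: "nat \<Rightarrow> real"
  assumes "\<And>x. 0 \<le> p x" "p sums 1" "(\<lambda>x. p x * z ^ x) sums G" "1 \<le> z"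
  shows "1 - (\<Sum>x\<le>K. p x) \<le> G / z ^ Suc K"
proof (rule sums_le)
  show "(\<lambda>x. p x - (if x \<in> {..K} then p x else 0)) sums (1 - (\<Sum>x\<le>K. p x))"
    by (intro sums_diff assms(2) sums_If_finite_set) simp
  show "(\<lambda>x. p x * z ^ x / z ^ Suc K) sums (G / z ^ Suc K)"
    by (rule sums_divide[OF assms(3)])
  show "p x - (if x \<in> {..K} then p x else 0) \<le> p x * z ^ x / z ^ Suc K" for x
  proof (cases "x \<le> K")
    case True
    then show ?thesis
      using assms(1,4) by simp
  next
    case False
    then have "z ^ Suc K \<le> z ^ x"
      using assms(4) by (intro power_increasing) auto
    then have "1 \<le> z ^ x / z ^ Suc K"
      using assms(4) by simp
    then have "p x * 1 \<le> p x * (z ^ x / z ^ Suc K)"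
      using assms(1) by (intro mult_left_mono) auto
    with False show ?thesis
      by simp
  qed
qed

lemma negbin_tail_le:
  assumes "\<kappa> > 0" "L > 0" "ennreal L \<le> lam" "lam < \<infinity>"
  shows "1 - (\<Sum>x\<le>K. negbin \<kappa> lam x) \<le> ((L + 2) / L) powr \<kappa> * ((L + 2) / (2 * L + 2)) ^ Suc K"
proof -
  define l where "l = enn2real lam"
  define z where "z = 2 * (L + 1) / (L + 2)"
  have "L \<le> l"
    using assms(2-4) enn2real_mono[OF assms(3)] by (simp add: l_def)
  have "0 < lam"
    using assms(2,3) by (auto intro: less_le_trans[of 0 "ennreal L"])
  have z1: "1 \<le> z"
    using assms(2) by (simp add: z_def)
  have zl: "z / (l + 1) \<le> 2 / (L + 2)"
  proof -
    have "z / (l + 1) \<le> z / (L + 1)"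
      using \<open>L \<le> l\<close> assms(2) z1 by (intro divide_left_mono) auto
    also have "\<dots> = 2 / (L + 2)"
      using assms(2) by (simp add: z_def divide_simps)
    finally show ?thesis .
  qed
  have "2 / (L + 2) < 1"
    using assms(2) by simp
  with zl have "z / (l + 1) < 1"
    by linarith
  then have "z < l + 1"
    using \<open>L \<le> l\<close> assms(2) by (simp add: divide_less_eq)
  then have pgf: "(\<lambda>x. negbin \<kappa> lam x * z ^ x) sums
                    ((l / (l + 1)) powr \<kappa> * (1 - z / (l + 1)) powr (- \<kappa>))"
    unfolding l_def using assms(1,4) \<open>0 < lam\<close> z1 by (intro negbin_pgf) (auto simp: l_def)
  have "(l / (l + 1)) powr \<kappa> * (1 - z / (l + 1)) powr (- \<kappa>) \<le> 1 * (L / (L + 2)) powr (- \<kappa>)"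
  proof (intro mult_mono)
    show "(l / (l + 1)) powr \<kappa> \<le> 1"
      using \<open>L \<le> l\<close> assms(1,2) by (intro powr_le1) auto
    have "L / (L + 2) \<le> 1 - z / (l + 1)"
      using zl assms(2) by (simp add: field_simps)
    then show "(1 - z / (l + 1)) powr (- \<kappa>) \<le> (L / (L + 2)) powr (- \<kappa>)"
      using assms(1,2) by (intro powr_mono2') auto
  qed simp_all
  also have "\<dots> = ((L + 2) / L) powr \<kappa>"
    using assms(2) by (simp add: powr_minus_divide powr_divide)
  finally have G: "(l / (l + 1)) powr \<kappa> * (1 - z / (l + 1)) powr (- \<kappa>) \<le> ((L + 2) / L) powr \<kappa>" .
  have "1 - (\<Sum>x\<le>K. negbin \<kappa> lam x) \<le> (l / (l + 1)) powr \<kappa> * (1 - z / (l + 1)) powr (- \<kappa>) / z ^ Suc K"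
    using assms(1) \<open>0 < lam\<close> by (intro tail_le_generating_function[OF _ _ pgf z1] negbin_nonneg negbin_sums) auto
  also have "\<dots> \<le> ((L + 2) / L) powr \<kappa> / z ^ Suc K"
    using G z1 by (intro divide_right_mono) auto
  also have "\<dots> = ((L + 2) / L) powr \<kappa> * ((L + 2) / (2 * L + 2)) ^ Suc K"
    by (simp add: z_def power_divide algebra_simps)
  finally show ?thesis .
qed

lemma borel_measurable_negbin_on:
  "sets H = sets borel \<Longrightarrow> (\<lambda>lam. negbin \<kappa> lam x) \<in> borel_measurable H"
  by (subst measurable_cong_sets[of H borel]) auto

lemma integrable_negbin:
  assumes "prob_space H" "sets H = sets borel" "\<kappa> > 0"
  shows "integrable H (\<lambda>lam. negbin \<kappa> lam x)"
proof -
  interpret prob_space H by fact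
  show ?thesis
    by (rule integrable_const_bound[where B = 1])
       (use assms negbin_nonneg negbin_le_1 borel_measurable_negbin_on in auto)
qed

lemma fH_nonneg: "\<kappa> > 0 \<Longrightarrow> 0 \<le> fH \<kappa> H x"
  unfolding fH_def by (simp add: negbin_nonneg)

lemma nn_integral_negbin_eq_fH:
  assumes "prob_space H" "sets H = sets borel" "\<kappa> > 0"
  shows "(\<integral>\<^sup>+lam. ennreal (negbin \<kappa> lam x) \<partial>H) = ennreal (fH \<kappa> H x)"
  unfolding fH_def
  by (rule nn_integral_eq_integral) (use assms integrable_negbin negbin_nonneg in auto)

lemma fH_sums:
  assumes "prob_on_pos_ext H" "\<kappa> > 0"
  shows "fH \<kappa> H sums 1"
proof -
  have H: "prob_space H" "sets H = sets borel" "emeasure H {0} = 0"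
    using assms(1) by (auto simp: prob_on_pos_ext_def)
  interpret prob_space H by (fact H(1))
  have "AE lam in H. lam \<noteq> 0"
    using AE_not_in[of "{0}" H] H(2,3) by (simp add: null_sets_def)
  then have sum_1: "AE lam in H. (\<Sum>x. ennreal (negbin \<kappa> lam x)) = 1"
  proof eventually_elim
    case (elim lam)
    show ?case
      using suminf_ennreal_eq[OF negbin_nonneg negbin_sums, OF assms(2) assms(2) elim] by simp
  qed
  have "(\<Sum>x. ennreal (fH \<kappa> H x)) = (\<Sum>x. \<integral>\<^sup>+lam. ennreal (negbin \<kappa> lam x) \<partial>H)"
    by (simp add: nn_integral_negbin_eq_fH H(1,2) assms(2))
  also have "\<dots> = (\<integral>\<^sup>+lam. (\<Sum>x. ennreal (negbin \<kappa> lam x)) \<partial>H)"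
    by (rule nn_integral_suminf[symmetric]) (subst measurable_cong_sets[OF H(2) refl], measurable)
  also have "\<dots> = ennreal 1"
    using sum_1 by (simp add: nn_integral_cong_AE emeasure_space_1)
  finally have "(\<Sum>x. ennreal (fH \<kappa> H x)) = ennreal 1" .
  with summable_sums[OF summableI, of "\<lambda>x. ennreal (fH \<kappa> H x)"] show ?thesis
    using sums_ennreal[of "fH \<kappa> H" 1] by (simp add: fH_nonneg assms(2))
qed

lemma fH_pos:
  assumes "prob_space H" "sets H = sets borel" "AE lam in H. 0 < lam \<and> lam < \<infinity>" "\<kappa> > 0"
  shows "0 < fH \<kappa> H x"
proof -
  have pos: "AE lam in H. ennreal (negbin \<kappa> lam x) \<noteq> 0"
    using assms(3) by eventually_elim (simp add: ennreal_eq_0_iff not_le negbin_pos assms(4))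
  have meas: "(\<lambda>lam. ennreal (negbin \<kappa> lam x)) \<in> borel_measurable H"
    by (subst measurable_cong_sets[OF assms(2) refl]) measurable
  have "(\<integral>\<^sup>+lam. ennreal (negbin \<kappa> lam x) \<partial>H) \<noteq> 0"
  proof
    assume "(\<integral>\<^sup>+lam. ennreal (negbin \<kappa> lam x) \<partial>H) = 0"
    then have "AE lam in H. ennreal (negbin \<kappa> lam x) = 0"
      using meas by (simp add: nn_integral_0_iff_AE)
    with pos have "AE lam in H. False"
      by eventually_elim simp
    then show False
      using prob_space.AE_False[OF assms(1)] by simp
  qed
  then show ?thesis
    using fH_nonneg[OF assms(4), of H x] by (simp add: nn_integral_negbin_eq_fH assms)
qed

lemma fH_tail_le:
  assumes "prob_space H" "sets H = sets borel" "AE lam in H. ennreal L \<le> lam \<and> lam < \<infinity>"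
    and "\<kappa> > 0" "L > 0"
  shows "1 - (\<Sum>x\<le>K. fH \<kappa> H x) \<le> ((L + 2) / L) powr \<kappa> * ((L + 2) / (2 * L + 2)) ^ Suc K"
proof -
  interpret prob_space H by fact
  have int: "integrable H (\<lambda>lam. negbin \<kappa> lam x)" for x
    using assms(1,2,4) by (rule integrable_negbin)
  have "1 - (\<Sum>x\<le>K. fH \<kappa> H x) = (\<integral>lam. 1 - (\<Sum>x\<le>K. negbin \<kappa> lam x) \<partial>H)"
    unfolding fH_def using int by (simp add: prob_space)
  also have "\<dots> \<le> (\<integral>lam. ((L + 2) / L) powr \<kappa> * ((L + 2) / (2 * L + 2)) ^ Suc K \<partial>H)"
  proof (intro integral_mono_AE)
    show "AE lam in H. 1 - (\<Sum>x\<le>K. negbin \<kappa> lam x) \<le> ((L + 2) / L) powr \<kappa> * ((L + 2) / (2 * L + 2)) ^ Suc K"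
      using assms(3) by eventually_elim (use negbin_tail_le assms(4,5) in blast)
  qed (simp_all add: int)
  also have "\<dots> = ((L + 2) / L) powr \<kappa> * ((L + 2) / (2 * L + 2)) ^ Suc K"
    by (simp add: prob_space)
  finally show ?thesis .
qed

section \<open>First-order optimality of the NPMLE\<close>

definition mix_measure :: "real \<Rightarrow> 'a measure \<Rightarrow> 'a measure \<Rightarrow> 'a measure" where
  "mix_measure t H1 H2 = measure_pmf (bernoulli_pmf t) \<bind> (\<lambda>b. if b then H1 else H2)"

lemma mix_measure_measurable:
  assumes "prob_space H1" "sets H1 = sets M" "prob_space H2" "sets H2 = sets M"
  shows "(\<lambda>b. if b then H1 else H2) \<in> measure_pmf (bernoulli_pmf t) \<rightarrow>\<^sub>M prob_algebra M"
  using assms by (auto simp: space_prob_algebra)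

lemma prob_on_pos_ext_mix_measure:
  assumes "prob_on_pos_ext H1" "prob_on_pos_ext H2"
  shows "prob_on_pos_ext (mix_measure t H1 H2)"
proof -
  let ?B = "measure_pmf (bernoulli_pmf t)" and ?N = "\<lambda>b. if b then H1 else H2"
  have N: "?N \<in> ?B \<rightarrow>\<^sub>M prob_algebra borel"
    using assms by (intro mix_measure_measurable) (auto simp: prob_on_pos_ext_def)
  have B: "?B \<in> space (prob_algebra ?B)"
    by (simp add: space_prob_algebra measure_pmf.prob_space_axioms)
  have "emeasure (mix_measure t H1 H2) {0} = (\<integral>\<^sup>+b. emeasure (?N b) {0} \<partial>?B)"
    unfolding mix_measure_def
    by (rule emeasure_bind) (use measurable_prob_algebraD[OF N] in auto)
  also have "\<dots> = 0"
    using assms by (intro nn_integral_zero' AE_I2) (simp add: prob_on_pos_ext_def)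
  finally show ?thesis
    unfolding prob_on_pos_ext_def mix_measure_def using prob_space_bind'[OF B N] sets_bind'[OF B N] by simp
qed

lemma fH_mix_measure:
  assumes "prob_on_pos_ext H1" "prob_on_pos_ext H2" "0 \<le> t" "t \<le> 1" "\<kappa> > 0"
  shows "fH \<kappa> (mix_measure t H1 H2) x = t * fH \<kappa> H1 x + (1 - t) * fH \<kappa> H2 x"
proof -
  let ?B = "measure_pmf (bernoulli_pmf t)" and ?N = "\<lambda>b. if b then H1 else H2"
  have H: "prob_space H1" "sets H1 = sets borel" "prob_space H2" "sets H2 = sets borel"
    using assms(1,2) by (auto simp: prob_on_pos_ext_def)
  have N: "?N \<in> ?B \<rightarrow>\<^sub>M subprob_algebra borel"
    using measurable_prob_algebraD[OF mix_measure_measurable[OF H]] .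
  have M: "prob_space (mix_measure t H1 H2)" "sets (mix_measure t H1 H2) = sets borel"
    using prob_on_pos_ext_mix_measure[OF assms(1,2)] by (auto simp: prob_on_pos_ext_def)
  have "ennreal (fH \<kappa> (mix_measure t H1 H2) x) = (\<integral>\<^sup>+lam. ennreal (negbin \<kappa> lam x) \<partial>mix_measure t H1 H2)"
    by (rule nn_integral_negbin_eq_fH[OF M assms(5), symmetric])
  also have "\<dots> = (\<integral>\<^sup>+b. \<integral>\<^sup>+lam. ennreal (negbin \<kappa> lam x) \<partial>?N b \<partial>?B)"
    unfolding mix_measure_def by (rule nn_integral_bind[OF _ N]) simp
  also have "\<dots> = ennreal t * ennreal (fH \<kappa> H1 x) + ennreal (1 - t) * ennreal (fH \<kappa> H2 x)"
    using assms(3,4) H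
    by (simp add: nn_integral_measure_pmf nn_integral_count_space_finite UNIV_bool nn_integral_negbin_eq_fH assms(5))
  also have "\<dots> = ennreal (t * fH \<kappa> H1 x + (1 - t) * fH \<kappa> H2 x)"
    using assms(3,4) by (simp add: fH_nonneg assms(5) ennreal_mult ennreal_plus)
  finally show ?thesis
    using assms(3,4) by (subst (asm) ennreal_inj) (auto simp: fH_nonneg assms(5))
qed

lemma sum_nonpos_if_sum_ln_nonpos:
  fixes c :: "'a \<Rightarrow> real"
  assumes "finite I" "\<delta> > 0"
    and "\<And>t. 0 < t \<Longrightarrow> t < \<delta> \<Longrightarrow> (\<Sum>i\<in>I. ln (1 + t * c i)) \<le> 0"
  shows "(\<Sum>i\<in>I. c i) \<le> 0"
proof (rule ccontr)
  let ?\<phi> = "\<lambda>t. \<Sum>i\<in>I. ln (1 + t * c i)"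
  assume "\<not> (\<Sum>i\<in>I. c i) \<le> 0"
  then have "(\<Sum>i\<in>I. c i) > 0"
    by simp
  moreover have "(?\<phi> has_real_derivative (\<Sum>i\<in>I. c i)) (at 0)"
    by (auto intro!: derivative_eq_intros)
  ultimately obtain d where d: "d > 0" "\<forall>h>0. h < d \<longrightarrow> ?\<phi> 0 < ?\<phi> (0 + h)"
    using DERIV_pos_inc_right by blast
  define t where "t = min d \<delta> / 2"
  have "0 < t" "t < d" "t < \<delta>"
    using d(1) assms(2) by (auto simp: t_def)
  with d(2) assms(3)[of t] show False
    by auto
qed

lemma loglik_eq_sum_list: "loglik \<kappa> H xs = (\<Sum>x\<leftarrow>xs. eln (fH \<kappa> H x))"
  by (simp add: loglik_def sum_list_sum_nth atLeast0LessThan)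

lemma sum_list_eln_pos:
  assumes "\<forall>x\<in>set xs. 0 < g x"
  shows "(\<Sum>x\<leftarrow>xs. eln (g x)) = ereal (\<Sum>x\<leftarrow>xs. ln (g x))"
  using assms by (induction xs) (auto simp: eln_def)

lemma sum_list_eln_eq_MInf:
  assumes "y \<in> set xs" "g y \<le> 0"
  shows "(\<Sum>x\<leftarrow>xs. eln (g x)) = -\<infinity>"
proof -
  have "(\<Sum>x\<leftarrow>ys. eln (g x)) \<noteq> \<infinity>" for ys
    by (induction ys) (auto simp: eln_def)
  then show ?thesis
    using assms by (induction xs) (auto simp: eln_def)
qed

lemma npmle_fH_pos:
  assumes "\<forall>x\<in>set xs. 0 < fH \<kappa> H x" "loglik \<kappa> H xs \<le> loglik \<kappa> Hh xs"
  shows "\<forall>x\<in>set xs. 0 < fH \<kappa> Hh x"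
proof (rule ccontr)
  assume "\<not> (\<forall>x\<in>set xs. 0 < fH \<kappa> Hh x)"
  then have "loglik \<kappa> Hh xs = -\<infinity>"
    unfolding loglik_eq_sum_list by (auto intro: sum_list_eln_eq_MInf)
  moreover have "loglik \<kappa> H xs \<noteq> -\<infinity>"
    using assms(1) by (simp add: loglik_eq_sum_list sum_list_eln_pos)
  ultimately show False
    using assms(2) by simp
qed

lemma npmle_ratio_sum_le:
  assumes "\<kappa> > 0" "prob_on_pos_ext H" "prob_on_pos_ext Hh" "\<forall>x\<in>set xs. 0 < fH \<kappa> Hh x"
    and "\<And>H'. prob_on_pos_ext H' \<Longrightarrow> loglik \<kappa> H' xs \<le> loglik \<kappa> Hh xs"
  shows "(\<Sum>x\<leftarrow>xs. fH \<kappa> H x / fH \<kappa> Hh x) \<le> length xs"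
proof -
  let ?f = "fH \<kappa> H" and ?g = "fH \<kappa> Hh" and ?I = "{..<length xs}"
  have sum_list_nth: "(\<Sum>x\<leftarrow>xs. \<phi> x) = (\<Sum>i\<in>?I. \<phi> (xs ! i))" for \<phi> :: "nat \<Rightarrow> real"
    by (simp add: sum_list_sum_nth atLeast0LessThan)
  have "(\<Sum>x\<leftarrow>xs. ?f x / ?g x - 1) \<le> 0"
    unfolding sum_list_nth
  proof (rule sum_nonpos_if_sum_ln_nonpos)
    fix t :: real
    assume t: "0 < t" "t < 1"
    let ?Ht = "mix_measure t H Hh"
    have ft: "fH \<kappa> ?Ht x = t * ?f x + (1 - t) * ?g x" for x
      using t by (intro fH_mix_measure assms(1-3)) auto
    have pos: "\<forall>x\<in>set xs. 0 < fH \<kappa> ?Ht x"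
      unfolding ft using t assms(4) fH_nonneg[OF assms(1)] by (auto intro!: add_nonneg_pos)
    have "ln (1 + t * (?f x / ?g x - 1)) = ln (fH \<kappa> ?Ht x) - ln (?g x)" if "x \<in> set xs" for x
    proof -
      have "0 < ?g x"
        using assms(4) that by simp
      then have "1 + t * (?f x / ?g x - 1) = fH \<kappa> ?Ht x / ?g x"
        by (simp add: ft field_simps)
      moreover have "0 < fH \<kappa> ?Ht x"
        using pos that by blast
      ultimately show ?thesis
        using \<open>0 < ?g x\<close> by (simp add: ln_div)
    qed
    then have "(\<Sum>x\<leftarrow>xs. ln (1 + t * (?f x / ?g x - 1))) = (\<Sum>x\<leftarrow>xs. ln (fH \<kappa> ?Ht x)) - (\<Sum>x\<leftarrow>xs. ln (?g x))"
      by (simp add: sum_list_subtractf cong: map_cong)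
    also have "\<dots> \<le> 0"
      using assms(5)[OF prob_on_pos_ext_mix_measure[OF assms(2,3)], of t] pos assms(4)
      by (simp add: loglik_eq_sum_list sum_list_eln_pos)
    finally show "(\<Sum>i\<in>?I. ln (1 + t * (?f (xs ! i) / ?g (xs ! i) - 1))) \<le> 0"
      by (simp add: sum_list_nth)
  qed simp_all
  then show ?thesis
    by (simp add: sum_list_subtractf sum_list_triv)
qed

section \<open>Hellinger distance\<close>

lemma summable_sqrt_mult:
  fixes g f :: "nat \<Rightarrow> real"
  assumes "\<And>x. 0 \<le> g x" "\<And>x. 0 \<le> f x" "summable g" "summable f"
  shows "summable (\<lambda>x. sqrt (g x * f x))"
proof (rule summable_comparison_test'[where g = "\<lambda>x. (g x + f x) / 2"])
  show "norm (sqrt (g x * f x)) \<le> (g x + f x) / 2" for x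
    using arith_geo_mean_sqrt[OF assms(1,2)] assms(1,2)[of x] by simp
qed (use assms in \<open>auto intro!: summable_divide summable_add\<close>)

lemma hellinger_terms_sums:
  fixes g f :: "nat \<Rightarrow> real"
  assumes "\<And>x. 0 \<le> g x" "g sums 1" "\<And>x. 0 \<le> f x" "f sums 1"
  shows "(\<lambda>x. (sqrt (g x) - sqrt (f x))\<^sup>2) sums (2 - 2 * (\<Sum>x. sqrt (g x * f x)))"
proof -
  have "(sqrt (g x) - sqrt (f x))\<^sup>2 = g x + f x - 2 * sqrt (g x * f x)" for x
    using assms(1,3)[of x] by (simp add: power2_diff real_sqrt_mult)
  moreover have "(\<lambda>x. g x + f x - 2 * sqrt (g x * f x)) sums (1 + 1 - 2 * (\<Sum>x. sqrt (g x * f x)))"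
    using assms sums_summable
    by (intro sums_diff sums_add sums_mult summable_sums summable_sqrt_mult) auto
  ultimately show ?thesis
    by simp
qed

lemma hellinger2_eq_one_minus_affinity:
  fixes g f :: "nat \<Rightarrow> real"
  assumes "\<And>x. 0 \<le> g x" "g sums 1" "\<And>x. 0 \<le> f x" "f sums 1"
  shows "hellinger2 g f = 1 - (\<Sum>x. sqrt (g x * f x))"
  unfolding hellinger2_def using sums_unique[OF hellinger_terms_sums[OF assms]] by simp

lemma hellinger2_nonneg:
  fixes g f :: "nat \<Rightarrow> real"
  assumes "\<And>x. 0 \<le> g x" "g sums 1" "\<And>x. 0 \<le> f x" "f sums 1"
  shows "0 \<le> hellinger2 g f"
  unfolding hellinger2_def
  using suminf_nonneg[OF sums_summable[OF hellinger_terms_sums[OF assms]]] by simp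

lemma hellinger2_le_1:
  fixes g f :: "nat \<Rightarrow> real"
  assumes "\<And>x. 0 \<le> g x" "g sums 1" "\<And>x. 0 \<le> f x" "f sums 1"
  shows "hellinger2 g f \<le> 1"
proof -
  have "0 \<le> (\<Sum>x. sqrt (g x * f x))"
    using assms sums_summable by (intro suminf_nonneg summable_sqrt_mult) auto
  then show ?thesis
    by (simp add: hellinger2_eq_one_minus_affinity[OF assms])
qed

lemma sum_list_map_eq_sum_count_atMost:
  fixes \<phi> :: "nat \<Rightarrow> 'b::comm_semiring_1"
  assumes "set xs \<subseteq> {..K}"
  shows "(\<Sum>x\<leftarrow>xs. \<phi> x) = (\<Sum>x\<le>K. of_nat (count_list xs x) * \<phi> x)"
  using assms
proof (induction xs)
  case (Cons a xs)
  have "(\<Sum>x\<le>K. of_nat (count_list (a # xs) x) * \<phi> x)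
          = (\<Sum>x\<le>K. (if a = x then \<phi> x else 0) + of_nat (count_list xs x) * \<phi> x)"
    by (intro sum.cong) (auto simp: distrib_right)
  with Cons show ?case
    by (simp add: sum.distrib)
qed simp

lemma three_halves_minus_inverse_square_le:
  fixes u :: real
  assumes "0 < u"
  shows "3 / 2 - 1 / (2 * u\<^sup>2) \<le> u"
proof -
  have "0 \<le> (u - 1)\<^sup>2 * (2 * u + 1)"
    using assms by simp
  also have "\<dots> = 2 * u ^ 3 - 3 * u\<^sup>2 + 1"
    by (simp add: algebra_simps power2_eq_square power3_eq_cube)
  finally show ?thesis
    using assms by (simp add: field_simps power2_eq_square power3_eq_cube)
qed

lemma length_le_sum_sqrt_ratio:
  fixes g f :: "'a \<Rightarrow> real"
  assumes "\<forall>x\<in>set xs. 0 < g x" "\<And>x. 0 < f x" "(\<Sum>x\<leftarrow>xs. f x / g x) \<le> length xs"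
  shows "length xs \<le> (\<Sum>x\<leftarrow>xs. sqrt (g x / f x))"
proof -
  have "3 / 2 - f x / g x / 2 \<le> sqrt (g x / f x)" if "x \<in> set xs" for x
  proof -
    have "0 < g x" "0 < f x"
      using assms(1,2) that by auto
    with three_halves_minus_inverse_square_le[of "sqrt (g x / f x)"] show ?thesis
      by simp
  qed
  then have "(\<Sum>x\<leftarrow>xs. 3 / 2 - f x / g x / 2) \<le> (\<Sum>x\<leftarrow>xs. sqrt (g x / f x))"
    by (rule sum_list_mono)
  moreover have "(\<Sum>x\<leftarrow>xs. 3 / 2 - f x / g x / 2) = 3 / 2 * length xs - (\<Sum>x\<leftarrow>xs. f x / g x) / 2"
    by (induction xs) (simp_all add: field_simps)
  ultimately show ?thesis
    using assms(3) by simp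
qed

lemma mult_le_square_div_plus_quarter:
  fixes u v w :: real
  assumes "0 < w"
  shows "u * v \<le> u\<^sup>2 / w + w * v\<^sup>2 / 4"
proof -
  have "0 \<le> (u - w * v / 2)\<^sup>2 / w"
    using assms by simp
  also have "\<dots> = u\<^sup>2 / w + w * v\<^sup>2 / 4 - u * v"
    using assms by (simp add: field_simps power2_eq_square)
  finally show ?thesis
    by simp
qed

text \<open>With \<open>P\<close> the empirical frequencies and \<open>h = sqrt (g / f)\<close>, the score condition gives
  \<open>\<Sum>\<^sub>x\<^sub>\<le>\<^sub>K P h \<ge> 1\<close>, whence \<open>H\<^sup>2 = 1 - \<Sum> f h \<le> \<Sum>\<^sub>x\<^sub>\<le>\<^sub>K (P - f) (h - 1) + T\<close>. AM-GM splits each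
  product into a chi-square term and a quarter of \<open>f (h - 1)\<^sup>2\<close>; these quarters sum to at most
  \<open>H\<^sup>2 / 2\<close> and are absorbed.\<close>

lemma hellinger2_le_chi2_plus_tail:
  fixes g f :: "nat \<Rightarrow> real"
  assumes g: "\<And>x. 0 \<le> g x" "g sums 1" and f: "\<And>x. 0 < f x" "f sums 1"
    and xs: "xs \<noteq> []" "set xs \<subseteq> {..K}" "\<forall>x\<in>set xs. 0 < g x"
    and score: "(\<Sum>x\<leftarrow>xs. f x / g x) \<le> length xs"
  shows "hellinger2 g f \<le> 2 * (\<Sum>x\<le>K. (count_list xs x / length xs - f x)\<^sup>2 / f x) + 2 * (1 - (\<Sum>x\<le>K. f x))"
proof -
  define P where "P x = count_list xs x / length xs" for x
  define h where "h x = sqrt (g x / f x)" for x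
  define B where "B = (\<Sum>x. sqrt (g x * f x))"
  define \<chi>2 where "\<chi>2 = (\<Sum>x\<le>K. (P x - f x)\<^sup>2 / f x)"
  define D where "D = (\<Sum>x\<le>K. f x * (h x - 1)\<^sup>2)"
  define T where "T = 1 - (\<Sum>x\<le>K. f x)"
  have f0: "0 \<le> f x" for x
    using f(1) less_imp_le by blast
  have n: "0 < real (length xs)"
    using xs(1) by simp
  have fh: "f x * h x = sqrt (g x * f x)" for x
    using f(1)[of x] g(1)[of x] by (simp add: h_def real_sqrt_divide real_sqrt_mult field_simps)
  have fh2: "f x * (h x - 1)\<^sup>2 = (sqrt (g x) - sqrt (f x))\<^sup>2" for x
    using f(1)[of x] g(1)[of x] by (simp add: h_def real_sqrt_divide power2_diff field_simps)
  have hel: "hellinger2 g f = 1 - B"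
    unfolding B_def using g f0 f(2) by (rule hellinger2_eq_one_minus_affinity)
  have P1: "(\<Sum>x\<le>K. P x) = 1"
    using sum_list_map_eq_sum_count_atMost[OF xs(2), of "\<lambda>_. 1 :: real"] n
    by (simp add: P_def sum_list_triv flip: sum_divide_distrib)
  have Ph: "1 \<le> (\<Sum>x\<le>K. P x * h x)"
    using length_le_sum_sqrt_ratio[OF xs(3) f(1) score] sum_list_map_eq_sum_count_atMost[OF xs(2), of h] n
    by (simp add: P_def h_def field_simps flip: sum_divide_distrib)
  have fhB: "(\<Sum>x\<le>K. f x * h x) \<le> B"
    unfolding fh B_def using g(1) f0 g(2) f(2) sums_summable
    by (intro sum_le_suminf summable_sqrt_mult) auto
  have D: "D \<le> 2 * hellinger2 g f"
    unfolding D_def fh2 hel B_def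
    using sum_le_suminf[OF sums_summable[OF hellinger_terms_sums[OF g f0 f(2)]], of "{..K}"]
          sums_unique[OF hellinger_terms_sums[OF g f0 f(2)]] by simp
  have amgm: "(P x - f x) * (h x - 1) \<le> (P x - f x)\<^sup>2 / f x + f x * (h x - 1)\<^sup>2 / 4" for x
    using f(1) by (rule mult_le_square_div_plus_quarter)
  have "hellinger2 g f \<le> (\<Sum>x\<le>K. P x * h x) - (\<Sum>x\<le>K. f x * h x)"
    using hel Ph fhB by linarith
  also have "\<dots> = (\<Sum>x\<le>K. (P x - f x) * (h x - 1)) + T"
    using P1 by (simp add: T_def algebra_simps sum_subtractf sum.distrib)
  also have "\<dots> \<le> \<chi>2 + D / 4 + T"
    using sum_mono[of "{..K}", OF amgm] by (simp add: \<chi>2_def D_def sum.distrib sum_divide_distrib)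
  finally have "hellinger2 g f \<le> 2 * \<chi>2 + 2 * T"
    using D by linarith
  then show ?thesis
    by (simp add: \<chi>2_def P_def T_def)
qed

section \<open>Empirical frequencies of i.i.d. samples\<close>

lemma replicate_pmf_Suc_map:
  "replicate_pmf (Suc n) p = p \<bind> (\<lambda>x. map_pmf (Cons x) (replicate_pmf n p))"
  by (simp add: map_pmf_def)

lemma pmf_replicate_pmf:
  "pmf (replicate_pmf n p) xs = (if length xs = n then (\<Prod>x\<leftarrow>xs. pmf p x) else 0)"
proof (induction n arbitrary: xs)
  case (Suc n)
  show ?case
  proof (cases xs)
    case Nil
    then show ?thesis
      by (simp add: replicate_pmf_Suc_map pmf_bind pmf_eq_0_set_pmf)
  next
    case (Cons y ys)
    have "pmf (map_pmf (Cons z) (replicate_pmf n p)) (y # ys) = pmf (replicate_pmf n p) ys * indicator {y} z" for z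
      by (cases "z = y") (auto simp: pmf_map_inj' pmf_eq_0_set_pmf)
    then have "pmf (replicate_pmf (Suc n) p) (y # ys) = (\<integral>z. pmf (replicate_pmf n p) ys * indicator {y} z \<partial>p)"
      by (simp only: replicate_pmf_Suc_map pmf_bind)
    then show ?thesis
      by (simp add: Suc.IH Cons measure_pmf_single)
  qed
qed (cases xs; simp)

lemma nn_integral_count_space_eq_replicate_pmf:
  assumes "\<And>xs. length xs = n \<Longrightarrow> 0 \<le> \<phi> xs"
  shows "(\<integral>\<^sup>+xs. ennreal ((\<Prod>i<n. pmf p (xs ! i)) * \<phi> xs) \<partial>count_space {xs. length xs = n})
           = (\<integral>\<^sup>+xs. ennreal (\<phi> xs) \<partial>replicate_pmf n p)"
proof -
  have "(\<integral>\<^sup>+xs. ennreal ((\<Prod>i<n. pmf p (xs ! i)) * \<phi> xs) \<partial>count_space {xs. length xs = n})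
          = (\<integral>\<^sup>+xs. ennreal (pmf (replicate_pmf n p) xs) * ennreal (\<phi> xs) \<partial>count_space UNIV)"
    by (subst nn_integral_count_space_indicator)
       (auto intro!: nn_integral_cong simp: pmf_replicate_pmf prod.list_conv_set_nth atLeast0LessThan
          ennreal_mult prod_nonneg assms)
  also have "\<dots> = (\<integral>\<^sup>+xs. ennreal (\<phi> xs) \<partial>replicate_pmf n p)"
    by (rule nn_integral_measure_pmf[symmetric])
  finally show ?thesis .
qed

lemma nn_integral_of_bool_affine:
  assumes "0 \<le> u" "0 \<le> v"
  shows "(\<integral>\<^sup>+x. ennreal (of_bool (P x) * u + v) \<partial>measure_pmf p) = ennreal (measure_pmf.prob p {x. P x} * u + v)"
proof -
  have "(\<integral>\<^sup>+x. ennreal (of_bool (P x) * u + v) \<partial>measure_pmf p)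
          = (\<integral>\<^sup>+x. ennreal u * indicator {x. P x} x + ennreal v \<partial>measure_pmf p)"
    using assms by (intro nn_integral_cong) (auto simp: indicator_def ennreal_plus)
  also have "\<dots> = ennreal (measure_pmf.prob p {x. P x} * u + v)"
    using assms by (simp add: nn_integral_add nn_integral_cmult measure_pmf.emeasure_space_1
        measure_pmf.emeasure_eq_measure ennreal_mult ennreal_plus mult.commute)
  finally show ?thesis .
qed

lemma real_length_filter_Cons:
  "real (length (filter P (x # xs))) = of_bool (P x) + real (length (filter P xs))"
  by simp

lemma nn_integral_replicate_pmf_length_filter:
  "(\<integral>\<^sup>+xs. ennreal (real (length (filter P xs))) \<partial>replicate_pmf n p)
     = ennreal (real n * measure_pmf.prob p {x. P x})"
proof (induction n)
  case (Suc n)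
  have "(\<integral>\<^sup>+xs. ennreal (real (length (filter P xs))) \<partial>replicate_pmf (Suc n) p)
          = (\<integral>\<^sup>+x. \<integral>\<^sup>+ys. ennreal (of_bool (P x)) + ennreal (real (length (filter P ys))) \<partial>replicate_pmf n p \<partial>p)"
    by (simp add: replicate_pmf_Suc_map real_length_filter_Cons ennreal_plus del: filter.simps(2) ennreal_plus_if)
  also have "\<dots> = (\<integral>\<^sup>+x. ennreal (of_bool (P x) * 1 + real n * measure_pmf.prob p {x. P x}) \<partial>p)"
    by (simp add: nn_integral_add Suc.IH measure_pmf.emeasure_space_1 ennreal_plus)
  also have "\<dots> = ennreal (real (Suc n) * measure_pmf.prob p {x. P x})"
    by (subst nn_integral_of_bool_affine) (simp_all add: algebra_simps)
  finally show ?case .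
qed simp

lemma nn_integral_replicate_pmf_length_filter_sq:
  "(\<integral>\<^sup>+xs. ennreal ((real (length (filter P xs)))\<^sup>2) \<partial>replicate_pmf n p)
     = ennreal (real n * measure_pmf.prob p {x. P x} + real n * (real n - 1) * (measure_pmf.prob p {x. P x})\<^sup>2)"
proof (induction n)
  case (Suc n)
  define q where "q = measure_pmf.prob p {x. P x}"
  have q: "0 \<le> q"
    by (simp add: q_def)
  have m2: "0 \<le> real n * q + real n * (real n - 1) * q\<^sup>2"
    using q by (cases n) (auto intro!: add_nonneg_nonneg mult_nonneg_nonneg)
  have sq: "(of_bool b + c)\<^sup>2 = of_bool b * (1 + 2 * c) + c\<^sup>2" for b and c :: real
    by (cases b) (simp_all add: power2_eq_square algebra_simps)
  have "(\<integral>\<^sup>+xs. ennreal ((real (length (filter P xs)))\<^sup>2) \<partial>replicate_pmf (Suc n) p)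
          = (\<integral>\<^sup>+x. \<integral>\<^sup>+ys. ennreal (of_bool (P x)) * ennreal (1 + 2 * real (length (filter P ys)))
                 + ennreal ((real (length (filter P ys)))\<^sup>2) \<partial>replicate_pmf n p \<partial>p)"
    by (simp add: replicate_pmf_Suc_map real_length_filter_Cons sq ennreal_plus ennreal_mult
          del: filter.simps(2) ennreal_plus_if)
  also have "\<dots> = (\<integral>\<^sup>+x. ennreal (of_bool (P x) * (1 + 2 * real n * q) + (real n * q + real n * (real n - 1) * q\<^sup>2)) \<partial>p)"
  proof (intro nn_integral_cong)
    fix x
    have "(\<integral>\<^sup>+ys. ennreal (1 + 2 * real (length (filter P ys))) \<partial>replicate_pmf n p) = ennreal (1 + 2 * real n * q)"
      using nn_integral_replicate_pmf_length_filter[where P = P and n = n and p = p] q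
      by (simp add: ennreal_plus ennreal_mult nn_integral_add nn_integral_cmult
            measure_pmf.emeasure_space_1 q_def mult.assoc del: ennreal_plus_if)
    then show "(\<integral>\<^sup>+ys. ennreal (of_bool (P x)) * ennreal (1 + 2 * real (length (filter P ys)))
                   + ennreal ((real (length (filter P ys)))\<^sup>2) \<partial>replicate_pmf n p)
                 = ennreal (of_bool (P x) * (1 + 2 * real n * q) + (real n * q + real n * (real n - 1) * q\<^sup>2))"
      using q m2 by (simp add: nn_integral_add nn_integral_cmult Suc.IH q_def ennreal_plus ennreal_mult
          del: ennreal_plus_if)
  qed
  also have "\<dots> = ennreal (real (Suc n) * q + real (Suc n) * (real (Suc n) - 1) * q\<^sup>2)"
    using q m2 by (subst nn_integral_of_bool_affine) (simp_all add: q_def algebra_simps power2_eq_square)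
  finally show ?case
    by (simp add: q_def)
qed simp

lemma count_list_eq_length_filter: "count_list xs x = length (filter (\<lambda>y. y = x) xs)"
  by (induction xs) auto

lemma ennreal_plus_mult:
  fixes a b c :: real
  assumes "0 \<le> a" "0 \<le> b" "0 \<le> c"
  shows "ennreal a + ennreal b * ennreal c = ennreal (a + b * c)"
  using assms by (simp add: ennreal_plus ennreal_mult del: ennreal_plus_if)

lemma nn_integral_replicate_pmf_frequency_sq:
  assumes "n > 0"
  shows "(\<integral>\<^sup>+xs. ennreal ((real (count_list xs x) / real n - pmf p x)\<^sup>2) \<partial>replicate_pmf n p)
           = ennreal (pmf p x * (1 - pmf p x) / real n)"
proof -
  define q where "q = pmf p x"
  define c where "c xs = real (count_list xs x)" for xs
  have q: "0 \<le> q" "q \<le> 1"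
    by (simp_all add: q_def pmf_le_1)
  have n: "0 < real n"
    using assms by simp
  have prob: "measure_pmf.prob p {y. y = x} = q"
    by (simp add: q_def measure_pmf_single)
  have m1: "(\<integral>\<^sup>+xs. ennreal (c xs) \<partial>replicate_pmf n p) = ennreal (real n * q)"
    using nn_integral_replicate_pmf_length_filter[where P = "\<lambda>y. y = x"] prob
    by (simp add: c_def count_list_eq_length_filter)
  have m2: "(\<integral>\<^sup>+xs. ennreal ((c xs)\<^sup>2) \<partial>replicate_pmf n p) = ennreal (real n * q + real n * (real n - 1) * q\<^sup>2)"
    using nn_integral_replicate_pmf_length_filter_sq[where P = "\<lambda>y. y = x"] prob
    by (simp add: c_def count_list_eq_length_filter)
  have m2_nonneg: "0 \<le> real n * q + real n * (real n - 1) * q\<^sup>2"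
    using n q by (cases n) (auto intro!: add_nonneg_nonneg mult_nonneg_nonneg)
  define V where "V = (\<integral>\<^sup>+xs. ennreal ((c xs / real n - q)\<^sup>2) \<partial>replicate_pmf n p)"
  \<comment> \<open>There is no subtraction in \<open>ennreal\<close>: integrate \<open>(c/n - q)\<^sup>2 + (2q/n) c = q\<^sup>2 + c\<^sup>2/n\<^sup>2\<close>,
    whose terms are all nonnegative, and cancel the finite term \<open>(2q/n) n q\<close> at the end.\<close>
  have "V + ennreal (2 * q / real n) * ennreal (real n * q)
          = (\<integral>\<^sup>+xs. ennreal ((c xs / real n - q)\<^sup>2) + ennreal (2 * q / real n) * ennreal (c xs) \<partial>replicate_pmf n p)"
    by (simp add: V_def nn_integral_add nn_integral_cmult m1)
  also have "\<dots> = (\<integral>\<^sup>+xs. ennreal (q\<^sup>2) + ennreal (1 / (real n)\<^sup>2) * ennreal ((c xs)\<^sup>2) \<partial>replicate_pmf n p)"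
  proof (intro nn_integral_cong)
    fix xs
    have "0 \<le> c xs"
      by (simp add: c_def)
    have "ennreal ((c xs / real n - q)\<^sup>2) + ennreal (2 * q / real n) * ennreal (c xs)
            = ennreal ((c xs / real n - q)\<^sup>2 + 2 * q / real n * c xs)"
      using q n \<open>0 \<le> c xs\<close> by (intro ennreal_plus_mult) auto
    also have "(c xs / real n - q)\<^sup>2 + 2 * q / real n * c xs = q\<^sup>2 + 1 / (real n)\<^sup>2 * (c xs)\<^sup>2"
      using n by (simp add: field_simps power2_eq_square)
    also have "ennreal \<dots> = ennreal (q\<^sup>2) + ennreal (1 / (real n)\<^sup>2) * ennreal ((c xs)\<^sup>2)"
      by (rule ennreal_plus_mult[symmetric]) auto
    finally show "ennreal ((c xs / real n - q)\<^sup>2) + ennreal (2 * q / real n) * ennreal (c xs)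
                    = ennreal (q\<^sup>2) + ennreal (1 / (real n)\<^sup>2) * ennreal ((c xs)\<^sup>2)" .
  qed
  also have "\<dots> = ennreal (q\<^sup>2) + ennreal (1 / (real n)\<^sup>2) * ennreal (real n * q + real n * (real n - 1) * q\<^sup>2)"
    by (simp add: nn_integral_add nn_integral_cmult m2 measure_pmf.emeasure_space_1)
  also have "\<dots> = ennreal (q\<^sup>2 + 1 / (real n)\<^sup>2 * (real n * q + real n * (real n - 1) * q\<^sup>2))"
    using m2_nonneg by (intro ennreal_plus_mult) auto
  also have "q\<^sup>2 + 1 / (real n)\<^sup>2 * (real n * q + real n * (real n - 1) * q\<^sup>2) = q * (1 - q) / real n + 2 * q / real n * (real n * q)"
    using n by (simp add: field_simps power2_eq_square)
  also have "ennreal \<dots> = ennreal (q * (1 - q) / real n) + ennreal (2 * q / real n) * ennreal (real n * q)"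
    using q n by (intro ennreal_plus_mult[symmetric]) auto
  finally have "V = ennreal (q * (1 - q) / real n)"
    by (subst (asm) (1 2) add.commute) (simp add: ennreal_add_left_cancel ennreal_mult_eq_top_iff)
  then show ?thesis
    by (simp add: V_def c_def q_def)
qed

lemma nn_integral_tail_count_chi2_le:
  fixes p :: "nat pmf"
  assumes "n > 0" "\<And>x. x \<le> K \<Longrightarrow> 0 < pmf p x"
  shows "(\<integral>\<^sup>+xs. ennreal (real (length (filter (\<lambda>y. K < y) xs))
                   + 2 * (\<Sum>x\<le>K. (real (count_list xs x) / real n - pmf p x)\<^sup>2 / pmf p x)) \<partial>replicate_pmf n p)
           \<le> ennreal (real n * (1 - (\<Sum>x\<le>K. pmf p x)) + 2 * (real K + 1) / real n)"
proof -
  define e where "e xs x = (real (count_list xs x) / real n - pmf p x)\<^sup>2" for xs x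
  have n: "0 < real n"
    using assms(1) by simp
  have pos: "0 < pmf p x" if "x \<in> {..K}" for x
    using assms(2) that by simp
  have integrand: "ennreal (real (length (filter (\<lambda>y. K < y) xs)) + 2 * (\<Sum>x\<le>K. e xs x / pmf p x))
      = ennreal (real (length (filter (\<lambda>y. K < y) xs))) + (\<Sum>x\<le>K. ennreal (2 / pmf p x) * ennreal (e xs x))" for xs
  proof -
    have "2 * (\<Sum>x\<le>K. e xs x / pmf p x) = (\<Sum>x\<le>K. 2 / pmf p x * e xs x)"
      by (simp add: sum_distrib_left)
    moreover have "ennreal (\<Sum>x\<le>K. 2 / pmf p x * e xs x) = (\<Sum>x\<le>K. ennreal (2 / pmf p x * e xs x))"
      using pos by (intro sum_ennreal[symmetric]) (simp add: e_def less_imp_le)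
    moreover have "\<dots> = (\<Sum>x\<le>K. ennreal (2 / pmf p x) * ennreal (e xs x))"
      using pos by (intro sum.cong refl ennreal_mult) (auto simp: e_def less_imp_le)
    moreover have "0 \<le> (\<Sum>x\<le>K. 2 / pmf p x * e xs x)"
      using pos by (intro sum_nonneg) (simp add: e_def less_imp_le)
    ultimately show ?thesis
      by (simp add: ennreal_plus del: ennreal_plus_if)
  qed
  have "(\<integral>\<^sup>+xs. ennreal (real (length (filter (\<lambda>y. K < y) xs)) + 2 * (\<Sum>x\<le>K. e xs x / pmf p x)) \<partial>replicate_pmf n p)
          = ennreal (real n * measure_pmf.prob p {y. K < y})
            + (\<Sum>x\<le>K. ennreal (2 / pmf p x) * ennreal (pmf p x * (1 - pmf p x) / real n))"
    unfolding integrand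
    by (simp add: nn_integral_add nn_integral_sum nn_integral_cmult e_def assms(1)
        nn_integral_replicate_pmf_length_filter nn_integral_replicate_pmf_frequency_sq)
  also have "\<dots> \<le> ennreal (real n * (1 - (\<Sum>x\<le>K. pmf p x))) + (\<Sum>x\<le>K. ennreal (2 / real n))"
  proof (intro add_mono sum_mono)
    have "measure_pmf.prob p {y. K < y} = 1 - measure_pmf.prob p {..K}"
      using measure_pmf.prob_compl[of "{..K}" p] by (simp add: Compl_eq_Diff_UNIV[symmetric] not_le greaterThan_def)
    then show "ennreal (real n * measure_pmf.prob p {y. K < y}) \<le> ennreal (real n * (1 - (\<Sum>x\<le>K. pmf p x)))"
      by (simp add: measure_measure_pmf_finite)
    fix x
    assume "x \<in> {..K}"
    then have "0 < pmf p x"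
      by (rule pos)
    then have "ennreal (2 / pmf p x) * ennreal (pmf p x * (1 - pmf p x) / real n) = ennreal (2 * (1 - pmf p x) / real n)"
      using n pmf_le_1[of p x] by (simp add: ennreal_mult[symmetric])
    also have "\<dots> \<le> ennreal (2 / real n)"
      using n by (intro ennreal_leI divide_right_mono) auto
    finally show "ennreal (2 / pmf p x) * ennreal (pmf p x * (1 - pmf p x) / real n) \<le> ennreal (2 / real n)" .
  qed
  also have "\<dots> = ennreal (real n * (1 - (\<Sum>x\<le>K. pmf p x)) + 2 * (real K + 1) / real n)"
  proof -
    have "(\<Sum>x\<le>K. pmf p x) \<le> 1"
      using measure_pmf.prob_le_1[of p "{..K}"] by (simp add: measure_measure_pmf_finite)
    moreover have "(\<Sum>x\<le>K. ennreal (2 / real n)) = ennreal (2 * (real K + 1) / real n)"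
      using n by (subst sum_ennreal) (auto simp: field_simps)
    ultimately show ?thesis
      using n by (simp add: ennreal_plus del: ennreal_plus_if)
  qed
  finally show ?thesis
    by (simp add: e_def)
qed

section \<open>The risk bound\<close>

lemma npmle_hellinger2_le:
  assumes "\<kappa> > 0" "prob_on_pos_ext Hs" "\<And>x. 0 < fH \<kappa> Hs x" "prob_on_pos_ext Hh"
    and "\<And>H. prob_on_pos_ext H \<Longrightarrow> loglik \<kappa> H xs \<le> loglik \<kappa> Hh xs" and "xs \<noteq> []"
  shows "hellinger2 (fH \<kappa> Hh) (fH \<kappa> Hs)
           \<le> real (length (filter (\<lambda>y. K < y) xs))
             + 2 * (\<Sum>x\<le>K. (real (count_list xs x) / real (length xs) - fH \<kappa> Hs x)\<^sup>2 / fH \<kappa> Hs x)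
             + 2 * (1 - (\<Sum>x\<le>K. fH \<kappa> Hs x))"
proof -
  let ?f = "fH \<kappa> Hs" and ?g = "fH \<kappa> Hh"
  define tail where "tail = real (length (filter (\<lambda>y. K < y) xs))"
  define \<chi>2 where "\<chi>2 = (\<Sum>x\<le>K. (real (count_list xs x) / real (length xs) - ?f x)\<^sup>2 / ?f x)"
  define T where "T = 1 - (\<Sum>x\<le>K. ?f x)"
  have f: "\<And>x. 0 \<le> ?f x" "?f sums 1" and g: "\<And>x. 0 \<le> ?g x" "?g sums 1"
    using assms(1,2,4) by (simp_all add: fH_nonneg fH_sums)
  have "0 \<le> \<chi>2"
    unfolding \<chi>2_def using f(1) by (intro sum_nonneg divide_nonneg_nonneg) auto
  moreover have "0 \<le> T"
    unfolding T_def using sum_le_1_if_sums_1[OF f] by simp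
  moreover have "0 \<le> tail"
    by (simp add: tail_def)
  ultimately have "hellinger2 ?g ?f \<le> tail + 2 * \<chi>2 + 2 * T"
  proof (cases "set xs \<subseteq> {..K}")
    case True
    have pos: "\<forall>x\<in>set xs. 0 < ?g x"
      by (rule npmle_fH_pos[where H = Hs]) (simp_all add: assms(3) assms(5)[OF assms(2)])
    have "(\<Sum>x\<leftarrow>xs. ?f x / ?g x) \<le> length xs"
      by (rule npmle_ratio_sum_le[OF assms(1,2,4) pos assms(5)])
    from hellinger2_le_chi2_plus_tail[OF g assms(3) f(2) assms(6) True pos this]
    have "hellinger2 ?g ?f \<le> 2 * \<chi>2 + 2 * T"
      by (simp add: \<chi>2_def T_def)
    with \<open>0 \<le> tail\<close> show ?thesis
      by linarith
  next
    case False
    then obtain y where "y \<in> set xs" "K < y"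
      by (auto simp: subset_iff not_le)
    then have "filter (\<lambda>y. K < y) xs \<noteq> []"
      by (auto simp: filter_empty_conv)
    then have "1 \<le> tail"
      unfolding tail_def by (cases "filter (\<lambda>y. K < y) xs") simp_all
    with hellinger2_le_1[OF g f] \<open>0 \<le> \<chi>2\<close> \<open>0 \<le> T\<close> show ?thesis
      by linarith
  qed
  then show ?thesis
    by (simp add: tail_def \<chi>2_def T_def)
qed

lemma npmle_risk_le:
  assumes "\<kappa> > 0" "prob_on_pos_ext Hs" "\<And>x. 0 < fH \<kappa> Hs x" "n > 0"
    and npmle: "\<forall>xs. length xs = n \<longrightarrow> prob_on_pos_ext (Hhat xs) \<and>
                  (\<forall>H. prob_on_pos_ext H \<longrightarrow> loglik \<kappa> H xs \<le> loglik \<kappa> (Hhat xs) xs)"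
  shows "(\<integral>\<^sup>+xs. ennreal ((\<Prod>i<n. fH \<kappa> Hs (xs ! i)) * hellinger2 (fH \<kappa> (Hhat xs)) (fH \<kappa> Hs))
            \<partial>count_space {xs. length xs = n})
           \<le> ennreal ((real n + 2) * (1 - (\<Sum>x\<le>K. fH \<kappa> Hs x)) + 2 * (real K + 1) / real n)"
proof -
  define f where "f = fH \<kappa> Hs"
  define T where "T = 1 - (\<Sum>x\<le>K. f x)"
  define R where "R xs = real (length (filter (\<lambda>y. K < y) xs))
                          + 2 * (\<Sum>x\<le>K. (real (count_list xs x) / real n - f x)\<^sup>2 / f x)" for xs
  have f: "\<And>x. 0 \<le> f x" "f sums 1"
    unfolding f_def using assms(1,2) by (simp_all add: fH_nonneg fH_sums)
  define p where "p = embed_pmf f"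
  have pmf_p: "pmf p x = f x" for x
    unfolding p_def
    by (rule pmf_embed_pmf) (simp_all add: f(1) nn_integral_count_space_nat suminf_ennreal_eq[OF f])
  have T: "0 \<le> T"
    using sum_le_1_if_sums_1[OF f] by (simp add: T_def)
  have hel: "0 \<le> hellinger2 (fH \<kappa> (Hhat xs)) f \<and> hellinger2 (fH \<kappa> (Hhat xs)) f \<le> R xs + 2 * T"
    if "length xs = n" for xs
  proof
    have Hhat: "prob_on_pos_ext (Hhat xs)"
      and mle: "\<And>H. prob_on_pos_ext H \<Longrightarrow> loglik \<kappa> H xs \<le> loglik \<kappa> (Hhat xs) xs"
      using npmle that by blast+
    show "0 \<le> hellinger2 (fH \<kappa> (Hhat xs)) f"
      using Hhat assms(1) f by (intro hellinger2_nonneg) (simp_all add: fH_nonneg fH_sums)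
    have "xs \<noteq> []"
      using that assms(4) by auto
    from npmle_hellinger2_le[OF assms(1-3) Hhat mle this, of K]
    show "hellinger2 (fH \<kappa> (Hhat xs)) f \<le> R xs + 2 * T"
      by (simp add: R_def T_def f_def that)
  qed
  have "(\<integral>\<^sup>+xs. ennreal ((\<Prod>i<n. f (xs ! i)) * hellinger2 (fH \<kappa> (Hhat xs)) f) \<partial>count_space {xs. length xs = n})
          = (\<integral>\<^sup>+xs. ennreal (hellinger2 (fH \<kappa> (Hhat xs)) f) \<partial>replicate_pmf n p)"
    using nn_integral_count_space_eq_replicate_pmf[of n "\<lambda>xs. hellinger2 (fH \<kappa> (Hhat xs)) f" p] hel
    by (simp add: pmf_p)
  also have "\<dots> \<le> (\<integral>\<^sup>+xs. ennreal (R xs) + ennreal (2 * T) \<partial>replicate_pmf n p)"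
  proof (intro nn_integral_mono_AE AE_pmfI)
    fix xs
    assume "xs \<in> set_pmf (replicate_pmf n p)"
    then have "length xs = n"
      by (simp add: set_replicate_pmf)
    moreover have "0 \<le> R xs"
      unfolding R_def using f(1) by (intro add_nonneg_nonneg mult_nonneg_nonneg sum_nonneg divide_nonneg_nonneg) auto
    ultimately have "ennreal (hellinger2 (fH \<kappa> (Hhat xs)) f) \<le> ennreal (R xs + 2 * T)"
      using hel by (intro ennreal_leI) blast
    also have "\<dots> = ennreal (R xs) + ennreal (2 * T)"
      using \<open>0 \<le> R xs\<close> T by (intro ennreal_plus) auto
    finally show "ennreal (hellinger2 (fH \<kappa> (Hhat xs)) f) \<le> ennreal (R xs) + ennreal (2 * T)" .
  qed
  also have "\<dots> = (\<integral>\<^sup>+xs. ennreal (R xs) \<partial>replicate_pmf n p) + ennreal (2 * T)"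
    by (simp add: nn_integral_add measure_pmf.emeasure_space_1)
  also have "\<dots> \<le> ennreal (real n * T + 2 * (real K + 1) / real n) + ennreal (2 * T)"
    using nn_integral_tail_count_chi2_le[OF assms(4), of K p] f(1) assms(3)
    by (intro add_mono) (simp_all add: R_def T_def pmf_p f_def)
  also have "\<dots> = ennreal (real n * T + 2 * (real K + 1) / real n + 2 * T)"
    using T by (intro ennreal_plus[symmetric]) auto
  also have "real n * T + 2 * (real K + 1) / real n + 2 * T = (real n + 2) * T + 2 * (real K + 1) / real n"
    by (simp add: algebra_simps)
  finally show ?thesis
    by (simp add: f_def T_def)
qed

lemma power_le_inverse_square:
  fixes \<rho> m :: real
  assumes "0 < \<rho>" "\<rho> < 1" "0 < m" "2 * ln m / - ln \<rho> \<le> real K"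
  shows "\<rho> ^ K \<le> 1 / m\<^sup>2"
proof -
  have "0 < - ln \<rho>"
    using assms(1,2) by simp
  then have "2 * ln m \<le> real K * - ln \<rho>"
    using assms(4) by (subst (asm) pos_divide_le_eq)
  then have "ln (\<rho> ^ K) \<le> ln (1 / m\<^sup>2)"
    using assms(1,3) by (simp add: ln_realpow ln_div)
  then show ?thesis
    using assms(1,3) by simp
qed

lemma log_rate_bound:
  fixes m a r T K :: real
  assumes "2 \<le> m" "0 < a" "0 < r" "0 \<le> T" "T \<le> a / m\<^sup>2" "K \<le> 2 * ln m / r + 1"
  shows "(m + 2) * T + 2 * (K + 1) / m \<le> ((2 * a + 4) / ln 2 + 4 / r) * ln m / m"
proof -
  define c where "c = (2 * a + 4) / ln 2 + 4 / r"
  have "2 * m \<le> m * m"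
    using assms(1) by (intro mult_right_mono) auto
  then have "(m + 2) * m * T \<le> 2 * m\<^sup>2 * T"
    using assms(4) by (intro mult_right_mono) (simp_all add: power2_eq_square algebra_simps)
  then have "(m + 2) * T * m \<le> 2 * m\<^sup>2 * T"
    by (simp add: ac_simps)
  also have "\<dots> \<le> 2 * a"
    using assms(1,5) by (simp add: field_simps)
  finally have tail: "(m + 2) * T * m \<le> 2 * a" .
  have count: "2 * (K + 1) \<le> 4 * ln m / r + 4"
    using assms(6) by simp
  have "1 \<le> ln m / ln 2"
    using assms(1) by simp
  then have const: "2 * a + 4 \<le> (2 * a + 4) / ln 2 * ln m"
    using assms(2) mult_left_mono[of 1 "ln m / ln 2" "2 * a + 4"] by simp
  have "c * ln m = (2 * a + 4) / ln 2 * ln m + 4 * ln m / r"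
    by (simp add: c_def algebra_simps)
  with tail count const have "(m + 2) * T * m + 2 * (K + 1) \<le> c * ln m"
    by linarith
  then have "((m + 2) * T * m + 2 * (K + 1)) / m \<le> c * ln m / m"
    using assms(1) by (intro divide_right_mono) auto
  moreover have "((m + 2) * T * m + 2 * (K + 1)) / m = (m + 2) * T + 2 * (K + 1) / m"
    using assms(1) by (simp add: field_simps)
  ultimately show ?thesis
    by (simp add: c_def)
qed

lemma AE_of_emeasure_eq_1:
  assumes "prob_space M" "A \<in> sets M" "emeasure M A = 1"
  shows "AE x in M. x \<in> A"
proof -
  interpret prob_space M by fact
  show ?thesis
    using AE_in_set_eq_1[OF assms(2)] assms(3) by (simp add: emeasure_eq_measure)
qed

lemma prob_on_pos_ext_if_AE_pos:
  assumes "prob_space H" "sets H = sets borel" "AE lam in H. 0 < lam"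
  shows "prob_on_pos_ext H"
proof -
  have "AE lam in H. lam \<notin> {0}"
    using assms(3) by eventually_elim auto
  then have "{0} \<in> null_sets H"
    by (simp add: AE_iff_null_sets assms(2))
  then show ?thesis
    using assms(1,2) by (simp add: prob_on_pos_ext_def null_setsD1)
qed

definition risk_constant :: "real \<Rightarrow> real \<Rightarrow> real" where
  "risk_constant \<kappa> L = (2 * ((L + 2) / L) powr \<kappa> + 4) / ln 2 + 4 / - ln ((L + 2) / (2 * L + 2))"

lemma risk_constant_pos:
  assumes "L > 0"
  shows "0 < risk_constant \<kappa> L"
proof -
  have "0 < 4 / - ln ((L + 2) / (2 * L + 2))"
    using assms by simp
  moreover have "0 < (2 * ((L + 2) / L) powr \<kappa> + 4) / ln 2"
    by (simp add: add_nonneg_pos)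
  ultimately show ?thesis
    unfolding risk_constant_def by linarith
qed

lemma npmle_risk_log_rate:
  assumes "\<kappa> > 0" "L > 0" "prob_space Hs" "sets Hs = sets borel"
    and "emeasure Hs {lam. ennreal L \<le> lam \<and> lam < \<infinity>} = 1" "2 \<le> n"
    and npmle: "\<forall>xs. length xs = n \<longrightarrow> prob_on_pos_ext (Hhat xs) \<and>
                  (\<forall>H. prob_on_pos_ext H \<longrightarrow> loglik \<kappa> H xs \<le> loglik \<kappa> (Hhat xs) xs)"
  shows "(\<integral>\<^sup>+xs. ennreal ((\<Prod>i<n. fH \<kappa> Hs (xs ! i)) * hellinger2 (fH \<kappa> (Hhat xs)) (fH \<kappa> Hs))
            \<partial>count_space {xs. length xs = n})
           \<le> ennreal (risk_constant \<kappa> L * ln (real n) / real n)"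
proof -
  define \<rho> where "\<rho> = (L + 2) / (2 * L + 2)"
  define a where "a = ((L + 2) / L) powr \<kappa>"
  define r where "r = - ln \<rho>"
  have \<rho>: "0 < \<rho>" "\<rho> < 1" and "0 < a" "0 < r"
    using assms(2) by (simp_all add: \<rho>_def a_def r_def)
  have supp: "AE lam in Hs. ennreal L \<le> lam \<and> lam < \<infinity>"
    using AE_of_emeasure_eq_1[OF assms(3) _ assms(5)] assms(4) by simp
  then have supp_pos: "AE lam in Hs. 0 < lam \<and> lam < \<infinity>"
    by eventually_elim (use assms(2) in \<open>auto intro: less_le_trans[of 0 "ennreal L"]\<close>)
  then have "prob_on_pos_ext Hs"
    by (intro prob_on_pos_ext_if_AE_pos assms(3,4)) (auto elim: AE_mp)
  have fpos: "0 < fH \<kappa> Hs x" for x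
    using assms(3,4) supp_pos assms(1) by (rule fH_pos)
  define K where "K = nat \<lceil>2 * ln (real n) / r\<rceil>"
  define T where "T = 1 - (\<Sum>x\<le>K. fH \<kappa> Hs x)"
  have "2 * ln (real n) / r \<le> real K"
    unfolding K_def by (rule real_nat_ceiling_ge)
  then have "\<rho> ^ Suc K \<le> 1 / (real n)\<^sup>2"
    using \<rho> assms(6) by (intro power_le_inverse_square) (auto simp: r_def)
  then have "a * \<rho> ^ Suc K \<le> a / (real n)\<^sup>2"
    using \<open>0 < a\<close> mult_left_mono[of "\<rho> ^ Suc K" "1 / (real n)\<^sup>2" a] by simp
  with fH_tail_le[OF assms(3,4) supp assms(1,2), of K] have "T \<le> a / (real n)\<^sup>2"
    by (simp add: T_def a_def \<rho>_def)
  have "0 \<le> T"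
    unfolding T_def using sum_le_1_if_sums_1[OF fH_nonneg fH_sums] \<open>prob_on_pos_ext Hs\<close> assms(1) by simp
  have "(\<integral>\<^sup>+xs. ennreal ((\<Prod>i<n. fH \<kappa> Hs (xs ! i)) * hellinger2 (fH \<kappa> (Hhat xs)) (fH \<kappa> Hs))
            \<partial>count_space {xs. length xs = n})
          \<le> ennreal ((real n + 2) * T + 2 * (real K + 1) / real n)"
    unfolding T_def using assms(6) by (intro npmle_risk_le assms(1) \<open>prob_on_pos_ext Hs\<close> fpos npmle) auto
  also have "\<dots> \<le> ennreal (risk_constant \<kappa> L * ln (real n) / real n)"
    unfolding risk_constant_def a_def[symmetric] \<rho>_def[symmetric] r_def[symmetric]
  proof (intro ennreal_leI log_rate_bound)
    show "real K \<le> 2 * ln (real n) / r + 1"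
      using \<open>0 < r\<close> assms(6) by (simp add: K_def of_nat_nat)
  qed (use assms(6) \<open>0 < a\<close> \<open>0 < r\<close> \<open>0 \<le> T\<close> \<open>T \<le> a / (real n)\<^sup>2\<close> in auto)
  finally show ?thesis .
qed

theorem theorem3p1:
  fixes \<kappa> L :: real
  assumes "\<kappa> > 0" and "L > 0"
  shows "\<exists>C>0. \<forall>Hstar n (Hhat :: nat list \<Rightarrow> ennreal measure).
     prob_space Hstar \<and> sets Hstar = sets borel \<and>
     emeasure Hstar {lam. ennreal L \<le> lam \<and> lam < \<infinity>} = 1 \<and>
     n \<ge> 2 \<and>
     (\<forall>xs. length xs = n \<longrightarrow> prob_on_pos_ext (Hhat xs) \<and>
        (\<forall>H. prob_on_pos_ext H \<longrightarrow> loglik \<kappa> H xs \<le> loglik \<kappa> (Hhat xs) xs))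
     \<longrightarrow>
     (\<integral>\<^sup>+ xs. ennreal ((\<Prod>i<n. fH \<kappa> Hstar (xs ! i)) *
                         hellinger2 (fH \<kappa> (Hhat xs)) (fH \<kappa> Hstar))
        \<partial>count_space {xs :: nat list. length xs = n})
     \<le> ennreal (C * ln (real n) / real n)"
proof (intro exI[of _ "risk_constant \<kappa> L"] conjI allI impI)
  show "0 < risk_constant \<kappa> L"
    using assms(2) by (rule risk_constant_pos)
qed (use npmle_risk_log_rate[OF assms] in blast)

end
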